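(* In the setting below, assume that $g(x)$ and $l(x)$ are self-reciprocal. If $\gcd\big(r_{22}(x),\ g_{11}(x)\bar g_{12}(x)-g_{12}(x)\bar g_{11}(x)\big)\neq 1$, then $C$ is not symplectic LCD.
   Context: Let $q$ be a prime power, $F=\mathbb{F}_q$, $m\ge1$ with $\gcd(q,m)=1$, and $R=F[x]/\langle x^m-1\rangle$; elements of $R$ are represented by polynomials of degree $<m$ and identified with their coefficient vectors in $F^m$. A quasi-cyclic code of length $2m$ and index $2$ is an $R$-submodule $C\subseteq R^2$. For $a,b\in R$ let $\langle a,b\rangle_e$ be the standard dot product of their coefficient vectors. The symplectic form on $R^2$ is $\langle (a_1,a_2),(b_1,b_2)\rangle_s=\langle a_1,b_2\rangle_e-\langle a_2,b_1\rangle_e$; $C$ is symplectic LCD if $C\cap C^{\perp_s}=\{0\}$. For a nonzero polynomial $f$ of degree $k$, $f^*(x)=x^kf(x^{-1})$; $f$ is self-reciprocal if $f^*=\alpha f$ for some $\alpha\in F$. For a polynomial $f$ of degree at most $m$, $\bar f(x)=x^m f(x^{-1})$. Suppose $C$ is generated as an $R$-module by $(g_{11}(x),g_{12}(x))$ and $(0,g_{22}(x))$, where $g_{11},g_{12},g_{22}\in F[x]$ satisfy: $g_{11}\mid x^m-1$, $g_{22}\mid x^m-1$, $\deg g_{12}<\deg g_{22}$, and $g_{11}g_{22}\mid (x^m-1)g_{12}$. Define $g=\gcd(g_{11},g_{22})$, $l=(x^m-1)/\mathrm{lcm}(g_{11},g_{22})$, $g_{22}=g\,g_{22}'$, $r_{22}=\gcd(g_{22}',g_{22}'^*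 )$. *)

theory Defs
  imports "HOL-Computational_Algebra.Computational_Algebra"
begin

definition xm1 :: "nat \<Rightarrow> 'a::field poly" where
  "xm1 m = monom 1 m - 1"

text \<open>Elements of R = F[x]/(x^m-1), represented by polynomials of degree < m.\<close>
definition Rset :: "nat \<Rightarrow> 'a::field poly set" where
  "Rset m = {p. degree p < m}"

definition euc :: "nat \<Rightarrow> 'a::field poly \<Rightarrow> 'a poly \<Rightarrow> 'a" where
  "euc m a b = (\<Sum>i<m. coeff a i * coeff b i)"

definition symp :: "nat \<Rightarrow> 'a::field poly \<times> 'a poly \<Rightarrow> 'a poly \<times> 'a poly \<Rightarrow> 'a" where
  "symp m a b = euc m (fst a) (snd b) - euc m (snd a) (fst b)"

definition qc_code :: "nat \<Rightarrow> 'a::field poly \<Rightarrow> 'a poly \<Rightarrow> 'a poly \<Rightarrow> ('a poly \<times> 'a poly) set" where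
  "qc_code m g11 g12 g22 =
     {((u * g11) mod xm1 m, (u * g12 + v * g22) mod xm1 m) | u v. True}"

definition symp_dual :: "nat \<Rightarrow> ('a::field poly \<times> 'a poly) set \<Rightarrow> ('a poly \<times> 'a poly) set" where
  "symp_dual m C = {b \<in> Rset m \<times> Rset m. \<forall>a\<in>C. symp m a b = 0}"

definition symplectic_LCD :: "nat \<Rightarrow> ('a::field poly \<times> 'a poly) set \<Rightarrow> bool" where
  "symplectic_LCD m C \<longleftrightarrow> C \<inter> symp_dual m C = {(0, 0)}"

text \<open>f^*(x) = x^{deg f} f(1/x) is the library's reflect_poly.\<close>
definition self_reciprocal :: "'a::field poly \<Rightarrow> bool" where
  "self_reciprocal f \<longleftrightarrow> f \<noteq> 0 \<and> (\<exists>\<alpha>. reflect_poly f = smult \<alpha> f)"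

text \<open>bar f(x) = x^m f(1/x) for deg f \<le> m.\<close>
definition barpoly :: "nat \<Rightarrow> 'a::field poly \<Rightarrow> 'a poly" where
  "barpoly m f = (\<Sum>i\<le>m. monom (coeff f (m - i)) i)"

end

theory Submission
  imports Defs
begin

text \<open>
  Let \<open>h = gcd(r22, E)\<close> with \<open>E = g11 bar(g12) - g12 bar(g11)\<close>, a non-unit by hypothesis, and
  write \<open>x^m - 1 = h u\<close>. Since \<open>x^m - 1\<close> is squarefree, \<open>h\<close> does not divide \<open>g11\<close>, so
  \<open>b = u (g11, g12) mod (x^m - 1)\<close> is a nonzero codeword. The Euclidean pairing \<open><a, b>\<close> is the
  constant coefficient of \<open>a bar(b) mod (x^m - 1)\<close>, and \<open>bar(u (f mod h)) = u^* bar(f mod h)\<close>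
  (reversal at degree \<open>deg h\<close>), where \<open>u^* h^* = -(x^m - 1)\<close>. Hence \<open>b\<close> is symplectically
  orthogonal to all of \<open>C\<close> once \<open>h^*\<close> divides both \<open>g22\<close> and
  \<open>g11 bar(g12 mod h) - g12 bar(g11 mod h)\<close>. The first holds because \<open>h\<close> divides \<open>g22'^*\<close>.
  For the second, \<open>E\<close> is anti-self-reciprocal of degree \<open>2m\<close>, so \<open>h^*\<close> divides \<open>E\<close>, and \<open>E\<close>
  differs from \<open>x^(m - deg h)\<close> times that expression by a multiple of \<open>h^*\<close>.
\<close>

lemma coeff_barpoly: "coeff (barpoly n f) i = (if i \<le> n then coeff f (n - i) else 0)"
  unfolding barpoly_def by (simp add: coeff_sum)

lemma barpoly_add: "barpoly n (f + g) = barpoly n f + barpoly n g"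
  by (rule poly_eqI) (simp add: coeff_barpoly)

lemma barpoly_diff: "barpoly n (f - g) = barpoly n f - barpoly n g"
  by (rule poly_eqI) (simp add: coeff_barpoly)

lemma degree_barpoly_le: "degree (barpoly n f) \<le> n"
  by (rule degree_le) (simp add: coeff_barpoly)

lemma barpoly_eq_monom_mult_reflect_poly:
  assumes "degree f \<le> n"
  shows "barpoly n f = monom 1 (n - degree f) * reflect_poly f"
  by (rule poly_eqI)
    (use assms in \<open>auto simp: coeff_barpoly coeff_monom_mult coeff_reflect_poly coeff_eq_0\<close>)

lemma barpoly_degree: "barpoly (degree f) f = reflect_poly f"
  by (simp add: barpoly_eq_monom_mult_reflect_poly)

lemma barpoly_add_index:
  assumes "degree f \<le> n"
  shows "barpoly (n + k) f = monom 1 k * barpoly n f"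
  by (rule poly_eqI) (use assms in \<open>auto simp: coeff_barpoly coeff_monom_mult coeff_eq_0\<close>)

lemma barpoly_barpoly:
  assumes "degree f \<le> n"
  shows "barpoly n (barpoly n f) = f"
  by (rule poly_eqI) (use assms in \<open>auto simp: coeff_barpoly coeff_eq_0\<close>)

lemma barpoly_mult:
  fixes f g :: "'a::field poly"
  assumes "degree f \<le> a" "degree g \<le> b"
  shows "barpoly (a + b) (f * g) = barpoly a f * barpoly b g"
proof (cases "f = 0 \<or> g = 0")
  case False
  then have "degree (f * g) = degree f + degree g"
    by (simp add: degree_mult_eq)
  with assms show ?thesis
    by (simp add: barpoly_eq_monom_mult_reflect_poly reflect_poly_mult mult_monom mult_ac)
qed (auto simp: barpoly_def)

lemma degree_mod_le: "h \<noteq> 0 \<Longrightarrow> degree (f mod h) \<le> degree (h :: 'a::field poly)"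
  using degree_mod_less[of h f] by auto

lemma barpoly_div_mod:
  fixes f h :: "'a::field poly"
  assumes "degree f \<le> n" and "h \<noteq> 0" and "degree h \<le> n"
  shows "barpoly n f = monom 1 (n - degree h) * barpoly (degree h) (f mod h)
                       + reflect_poly h * barpoly (n - degree h) (f div h)"
proof -
  have deg_mod: "degree (f mod h) \<le> degree h"
    using \<open>h \<noteq> 0\<close> by (rule degree_mod_le)
  have deg_div: "degree (f div h) \<le> n - degree h"
  proof (cases "f div h = 0")
    case False
    have "degree (h * (f div h)) \<le> n"
      using degree_diff_le[OF assms(1) order.trans[OF deg_mod assms(3)]]
      by (simp add: minus_mod_eq_mult_div [symmetric])
    with False \<open>h \<noteq> 0\<close> show ?thesis
      by (simp add: degree_mult_eq)
  qed simp
  have "barpoly n f = barpoly n (f mod h) + barpoly (degree h + (n - degree h)) (h * (f div h))"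
    using assms(3) by (simp flip: barpoly_add)
  also have "\<dots> = monom 1 (n - degree h) * barpoly (degree h) (f mod h)
                    + reflect_poly h * barpoly (n - degree h) (f div h)"
    using barpoly_add_index[OF deg_mod, of "n - degree h"] assms(3)
      barpoly_mult[OF order.refl deg_div, of h]
    by (simp add: barpoly_degree)
  finally show ?thesis .
qed

lemma reflect_poly_dvd_reflect_poly:
  "a dvd b \<Longrightarrow> reflect_poly a dvd reflect_poly (b :: 'a::field poly)"
  by (metis dvdE dvd_triv_left reflect_poly_mult)

lemma reflect_poly_dvd_if_dvd_reflect_poly:
  fixes h p :: "'a::field poly"
  assumes "coeff p 0 \<noteq> 0" and "h dvd reflect_poly p"
  shows "reflect_poly h dvd p"
  using reflect_poly_dvd_reflect_poly[OF assms(2)] assms(1) by simp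

lemma reflect_poly_dvd_barpoly:
  fixes h f :: "'a::field poly"
  assumes "h dvd f" and "degree f \<le> n"
  shows "reflect_poly h dvd barpoly n f"
  using reflect_poly_dvd_reflect_poly[OF assms(1)]
  by (simp add: barpoly_eq_monom_mult_reflect_poly[OF assms(2)])

lemma barpoly_cross_difference:
  fixes f g :: "'a::field poly"
  assumes "degree f \<le> m" and "degree g \<le> m"
  shows "barpoly (m + m) (f * barpoly m g - g * barpoly m f) = - (f * barpoly m g - g * barpoly m f)"
  using assms
  by (simp add: barpoly_diff barpoly_mult degree_barpoly_le barpoly_barpoly algebra_simps)

lemma reflect_poly_dvd_cross_difference:
  fixes f g h :: "'a::field poly"
  assumes "degree f \<le> m" and "degree g \<le> m" and "h dvd f * barpoly m g - g * barpoly m f"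
  shows "reflect_poly h dvd f * barpoly m g - g * barpoly m f"
proof -
  have "degree (f * barpoly m g - g * barpoly m f) \<le> m + m"
    using assms(1,2) degree_barpoly_le[of m]
    by (intro degree_diff_le order.trans[OF degree_mult_le] add_mono) auto
  from reflect_poly_dvd_barpoly[OF assms(3) this]
  have "reflect_poly h dvd - (f * barpoly m g - g * barpoly m f)"
    by (simp only: barpoly_cross_difference[OF assms(1,2)])
  then show ?thesis
    by (simp only: dvd_minus_iff)
qed

lemma coprime_monom_if_coeff_0_neq_0:
  fixes p :: "'a::field_gcd poly"
  assumes "coeff p 0 \<noteq> 0"
  shows "coprime p (monom 1 k)"
proof -
  have "prime_elem ([:0, 1:] :: 'a poly)"
    by (rule prime_elem_linear_field_poly) simp
  moreover have "\<not> [:0, 1:] dvd p"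
    using assms by (simp add: dvd_iff_poly_eq_0 poly_0_coeff_0)
  ultimately have "coprime p ([:0, 1:] ^ k)"
    by (rule prime_elem_imp_power_coprime)
  then show ?thesis
    by (simp add: monom_altdef)
qed

lemma coeff_xm1: "coeff (xm1 m) i = (if i = m then 1 else 0) - (if i = 0 then 1 else 0)"
  unfolding xm1_def by simp

lemma degree_xm1:
  assumes "m \<ge> 1"
  shows "degree (xm1 m :: 'a::field poly) = m"
proof (rule antisym)
  show "degree (xm1 m :: 'a poly) \<le> m"
    by (rule degree_le) (auto simp: coeff_xm1)
  show "m \<le> degree (xm1 m :: 'a poly)"
    using assms by (intro le_degree) (simp add: coeff_xm1)
qed

lemma xm1_neq_0: "m \<ge> 1 \<Longrightarrow> xm1 m \<noteq> (0 :: 'a::field poly)"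
  using degree_xm1[of m] by (metis degree_0 not_one_le_zero)

lemma degree_mod_xm1_less: "m \<ge> 1 \<Longrightarrow> degree (p mod xm1 m :: 'a::field poly) < m"
  using degree_mod_less[of "xm1 m" p] xm1_neq_0[of m] degree_xm1[of m, where 'a='a]
  by (metis degree_0 less_le_trans zero_less_one)

lemma degree_le_if_dvd_xm1: "m \<ge> 1 \<Longrightarrow> p dvd xm1 m \<Longrightarrow> degree (p :: 'a::field poly) \<le> m"
  using dvd_imp_degree_le[of p "xm1 m"] by (simp add: xm1_neq_0 degree_xm1)

lemma reflect_poly_xm1:
  assumes "m \<ge> 1"
  shows "reflect_poly (xm1 m :: 'a::field poly) = - xm1 m"
  by (rule poly_eqI) (use assms in \<open>auto simp: coeff_reflect_poly degree_xm1 coeff_xm1\<close>)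

lemma coeff_0_neq_0_if_dvd_xm1:
  assumes "m \<ge> 1" and "p dvd (xm1 m :: 'a::field poly)"
  shows "coeff p 0 \<noteq> 0"
proof
  assume "coeff p 0 = 0"
  moreover obtain k where "xm1 m = p * k"
    using assms(2) by (rule dvdE)
  ultimately have "coeff (xm1 m :: 'a poly) 0 = 0"
    by (simp add: coeff_mult_0)
  with assms(1) show False
    by (simp add: coeff_xm1)
qed

lemma coeff_0_mod_xm1:
  fixes P :: "'a::field poly"
  assumes "m \<ge> 1" and "degree P < 2 * m"
  shows "coeff (P mod xm1 m) 0 = coeff P 0 + coeff P m"
proof -
  define Q where "Q = (\<Sum>i<m. monom (coeff P i) i)"
  define R where "R = (\<Sum>i<m. monom (coeff P (m + i)) i)"
  have coeff_Q: "coeff Q k = (if k < m then coeff P k else 0)" for k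
    unfolding Q_def by (simp add: coeff_sum)
  have coeff_R: "coeff R k = (if k < m then coeff P (m + k) else 0)" for k
    unfolding R_def by (simp add: coeff_sum)
  have "P = Q + monom 1 m * R"
    by (rule poly_eqI) (use assms(2) in \<open>auto simp: coeff_Q coeff_R coeff_monom_mult coeff_eq_0\<close>)
  then have "P = (Q + R) + xm1 m * R"
    unfolding xm1_def by (simp add: algebra_simps)
  moreover have "degree (Q + R) < degree (xm1 m :: 'a poly)"
  proof -
    have "degree (Q + R) \<le> m - 1"
      by (rule degree_le) (auto simp: coeff_Q coeff_R)
    with assms(1) show ?thesis
      by (simp add: degree_xm1)
  qed
  ultimately have "P mod xm1 m = Q + R"
    by (simp add: mod_poly_less)
  with assms(1) show ?thesis
    by (simp add: coeff_Q coeff_R)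
qed

lemma euc_eq_coeff_0_mod_xm1:
  fixes a b :: "'a::field poly"
  assumes "m \<ge> 1" and "degree a < m" and "degree b < m"
  shows "euc m a b = coeff ((a * barpoly m b) mod xm1 m) 0"
proof -
  have "degree (a * barpoly m b) < 2 * m"
    using degree_mult_le[of a "barpoly m b"] degree_barpoly_le[of m b] assms(2) by linarith
  moreover have "coeff (a * barpoly m b) 0 = 0"
    using assms(3) by (simp add: coeff_mult coeff_barpoly coeff_eq_0)
  moreover have "coeff (a * barpoly m b) m = (\<Sum>i<m. coeff a i * coeff b i)"
    using assms(2) by (simp add: coeff_mult coeff_barpoly lessThan_Suc_atMost [symmetric] coeff_eq_0)
  ultimately show ?thesis
    using coeff_0_mod_xm1[OF assms(1), of "a * barpoly m b"] by (simp add: euc_def)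
qed

lemma symp_mod_xm1:
  fixes a1 a2 b1 b2 :: "'a::field poly"
  assumes "m \<ge> 1" and "degree b1 < m" and "degree b2 < m"
  shows "symp m (a1 mod xm1 m, a2 mod xm1 m) (b1, b2)
           = coeff ((a1 * barpoly m b2 - a2 * barpoly m b1) mod xm1 m) 0"
proof -
  have "symp m (a1 mod xm1 m, a2 mod xm1 m) (b1, b2)
          = coeff ((a1 mod xm1 m * barpoly m b2) mod xm1 m - (a2 mod xm1 m * barpoly m b1) mod xm1 m) 0"
    using assms by (simp add: symp_def euc_eq_coeff_0_mod_xm1 degree_mod_xm1_less)
  also have "\<dots> = coeff ((a1 * barpoly m b2 - a2 * barpoly m b1) mod xm1 m) 0"
    by (simp add: mod_mult_left_eq poly_mod_diff_left)
  finally show ?thesis .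
qed

lemma of_nat_card_UNIV_eq_0: "of_nat (card (UNIV :: 'a::{finite, ring_1} set)) = (0 :: 'a)"
proof -
  have "(\<Sum>x\<in>UNIV. x + 1) = (\<Sum>x\<in>(UNIV :: 'a set). x)"
    by (rule sum.reindex_bij_witness[of _ "\<lambda>x. x - 1" "\<lambda>x. x + 1"]) auto
  then show ?thesis
    by (simp add: sum.distrib)
qed

lemma of_nat_neq_0_if_coprime_card:
  assumes "coprime (card (UNIV :: 'a::{finite, field} set)) m"
  shows "of_nat m \<noteq> (0 :: 'a)"
proof
  assume "of_nat m = (0 :: 'a)"
  then have "CHAR('a) dvd m"
    by (simp add: of_nat_eq_0_iff_char_dvd)
  moreover have "CHAR('a) dvd card (UNIV :: 'a set)"
    using of_nat_card_UNIV_eq_0[where 'a='a] by (simp add: of_nat_eq_0_iff_char_dvd)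
  ultimately have "CHAR('a) = 1"
    using assms by (metis coprime_common_divisor nat_dvd_1_iff_1)
  then show False
    using of_nat_CHAR[where 'a='a] by simp
qed

text \<open>\<open>x^m - 1\<close> is coprime to its derivative \<open>m x^(m-1)\<close>, hence squarefree.\<close>
lemma is_unit_if_square_dvd_xm1:
  fixes h :: "'a::field poly"
  assumes "m \<ge> 1" and "of_nat m \<noteq> (0 :: 'a)" and "h * h dvd xm1 m"
  shows "is_unit h"
proof -
  obtain w where X: "xm1 m = h * (h * w)"
    using assms(3) by (metis dvdE mult.assoc)
  have "pderiv (xm1 m) = h * pderiv (h * w) + (h * w) * pderiv h"
    unfolding X by (rule pderiv_mult)
  then have "h dvd pderiv (xm1 m)"
    by simp
  moreover have "pderiv (xm1 m :: 'a poly) = smult (of_nat m) (monom 1 (m - 1))"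
    unfolding xm1_def by (simp add: pderiv_diff pderiv_monom smult_monom)
  ultimately have "h dvd monom 1 (m - 1)"
    using assms(2) by (simp add: dvd_smult_iff)
  moreover have "monom 1 m = [:0, 1:] * monom (1 :: 'a) (m - 1)"
    using assms(1) by (cases m) (auto simp: monom_altdef)
  ultimately have "h dvd monom 1 m"
    by (metis dvd_mult2 mult.commute)
  moreover have "h dvd monom 1 m - 1"
    using X by (simp add: xm1_def)
  ultimately have "h dvd monom 1 m - (monom 1 m - 1)"
    by (rule dvd_diff)
  then show ?thesis
    by simp
qed

lemma not_dvd_if_dvd_cofactor_of_gcd:
  fixes f g h :: "'a::field_gcd poly"
  assumes "m \<ge> 1" and "of_nat m \<noteq> (0 :: 'a)" and "g dvd xm1 m"
    and "h dvd g div gcd f g" and "\<not> is_unit h"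
  shows "\<not> h dvd f"
proof
  assume "h dvd f"
  have g_eq: "g = gcd f g * (g div gcd f g)"
    by (rule dvd_mult_div_cancel [symmetric]) simp
  then have "h dvd g"
    using assms(4) by (metis dvd_triv_right dvd_trans)
  with \<open>h dvd f\<close> have "h dvd gcd f g"
    by (rule gcd_greatest)
  then have "h * h dvd g"
    using assms(4) g_eq by (metis mult_dvd_mono)
  then have "is_unit h"
    using is_unit_if_square_dvd_xm1[OF assms(1,2)] assms(3) by (metis dvd_trans)
  with assms(5) show False ..
qed

lemma barpoly_cofactor_mult_mod_xm1:
  fixes h u f :: "'a::field poly"
  assumes "m \<ge> 1" and "h * u = xm1 m"
  shows "barpoly m ((u * f) mod xm1 m) = reflect_poly u * barpoly (degree h) (f mod h)"
proof -
  have "h \<noteq> 0" and "u \<noteq> 0"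
    using assms xm1_neq_0[of m] by auto
  then have "degree u + degree h = m"
    using degree_xm1[OF assms(1)] by (metis assms(2) add.commute degree_mult_eq)
  moreover have "(u * f) mod xm1 m = u * (f mod h)"
    by (simp add: mod_mult_mult1 mult.commute flip: assms(2))
  ultimately have "barpoly m ((u * f) mod xm1 m) = barpoly (degree u + degree h) (u * (f mod h))"
    by simp
  also have "\<dots> = reflect_poly u * barpoly (degree h) (f mod h)"
    using degree_mod_le[OF \<open>h \<noteq> 0\<close>] by (simp add: barpoly_mult barpoly_degree)
  finally show ?thesis .
qed

lemma reflect_poly_dvd_remainder_cross_difference:
  fixes f g h :: "'a::field_gcd poly"
  assumes "degree f \<le> m" and "degree g \<le> m" and "h \<noteq> 0" and "degree h \<le> m"
    and "reflect_poly h dvd f * barpoly m g - g * barpoly m f"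
  shows "reflect_poly h dvd f * barpoly (degree h) (g mod h) - g * barpoly (degree h) (f mod h)"
    (is "_ dvd ?V")
proof -
  have "f * barpoly m g - g * barpoly m f = monom 1 (m - degree h) * ?V
          + reflect_poly h * (f * barpoly (m - degree h) (g div h) - g * barpoly (m - degree h) (f div h))"
    by (simp add: barpoly_div_mod[OF assms(1,3,4)] barpoly_div_mod[OF assms(2,3,4)] algebra_simps)
  with assms(5) have "reflect_poly h dvd monom 1 (m - degree h) * ?V"
    by (metis dvd_add_left_iff dvd_triv_left)
  moreover have "coprime (reflect_poly h) (monom 1 (m - degree h))"
    using assms(3) by (intro coprime_monom_if_coeff_0_neq_0) simp
  ultimately show ?thesis
    by (simp add: coprime_dvd_mult_right_iff)
qed

lemma symp_cofactor_codeword_eq_0: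
  fixes h u g11 g12 g22 :: "'a::field_gcd poly"
  assumes "m \<ge> 1" and "h * u = xm1 m" and "degree g11 \<le> m" and "degree g12 \<le> m"
    and "reflect_poly h dvd g22"
    and "reflect_poly h dvd g11 * barpoly m g12 - g12 * barpoly m g11"
    and "a \<in> qc_code m g11 g12 g22"
  shows "symp m a ((u * g11) mod xm1 m, (u * g12) mod xm1 m) = 0"
proof -
  obtain s t where a: "a = ((s * g11) mod xm1 m, (s * g12 + t * g22) mod xm1 m)"
    using assms(7) unfolding qc_code_def by blast
  have "h \<noteq> 0"
    using assms(1,2) xm1_neq_0[of m] by auto
  have "degree h \<le> m"
    using assms(1) by (rule degree_le_if_dvd_xm1) (simp flip: assms(2))
  define c1 where "c1 = barpoly (degree h) (g11 mod h)"
  define c2 where "c2 = barpoly (degree h) (g12 mod h)"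
  have "reflect_poly h dvd g11 * c2 - g12 * c1"
    unfolding c1_def c2_def
    by (rule reflect_poly_dvd_remainder_cross_difference) (use assms \<open>h \<noteq> 0\<close> \<open>degree h \<le> m\<close> in auto)
  with assms(5) obtain w where w: "s * (g11 * c2 - g12 * c1) - t * g22 * c1 = reflect_poly h * w"
    by (metis dvd_diff dvd_mult dvd_mult2 dvdE)
  have "s * g11 * barpoly m ((u * g12) mod xm1 m) - (s * g12 + t * g22) * barpoly m ((u * g11) mod xm1 m)
          = reflect_poly u * (s * (g11 * c2 - g12 * c1) - t * g22 * c1)"
    unfolding c1_def c2_def barpoly_cofactor_mult_mod_xm1[OF assms(1,2)] by (simp add: algebra_simps)
  also have "\<dots> = reflect_poly (h * u) * w"
    unfolding w reflect_poly_mult by (simp only: ac_simps)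
  also have "\<dots> = - (xm1 m * w)"
    by (simp add: assms(2) reflect_poly_xm1[OF assms(1)])
  finally have "xm1 m dvd s * g11 * barpoly m ((u * g12) mod xm1 m)
                  - (s * g12 + t * g22) * barpoly m ((u * g11) mod xm1 m)"
    by (metis dvd_minus_iff dvd_triv_left)
  then show ?thesis
    using assms(1) by (simp add: a symp_mod_xm1 degree_mod_xm1_less mod_eq_0_iff_dvd)
qed

lemma not_symplectic_LCD_if_cofactor:
  fixes h u g11 g12 g22 :: "'a::field_gcd poly"
  assumes "m \<ge> 1" and "h * u = xm1 m" and "\<not> h dvd g11"
    and "degree g11 \<le> m" and "degree g12 \<le> m"
    and "reflect_poly h dvd g22"
    and "reflect_poly h dvd g11 * barpoly m g12 - g12 * barpoly m g11"
  shows "\<not> symplectic_LCD m (qc_code m g11 g12 g22)"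
proof
  define b where "b = ((u * g11) mod xm1 m, (u * g12) mod xm1 m)"
  assume "symplectic_LCD m (qc_code m g11 g12 g22)"
  moreover have "b \<in> qc_code m g11 g12 g22"
    unfolding qc_code_def b_def by (rule CollectI, rule exI[of _ u], rule exI[of _ 0]) simp
  moreover have "b \<in> symp_dual m (qc_code m g11 g12 g22)"
    using symp_cofactor_codeword_eq_0[OF assms(1,2,4,5,6,7)] assms(1)
    by (auto simp: symp_dual_def Rset_def b_def degree_mod_xm1_less)
  moreover have "b \<noteq> (0, 0)"
  proof
    assume "b = (0, 0)"
    then have "h * u dvd g11 * u"
      unfolding assms(2) by (simp add: b_def mod_eq_0_iff_dvd mult.commute)
    moreover have "u \<noteq> 0"
      using assms(1,2) xm1_neq_0[of m] by auto
    ultimately show False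
      using assms(3) by simp
  qed
  ultimately show False
    unfolding symplectic_LCD_def by blast
qed

theorem lemma5p5:
  fixes m :: nat
    and g11 g12 g22 :: "'a::{finite, field_gcd} poly"
  assumes "m \<ge> 1"
    and "coprime (card (UNIV :: 'a set)) m"
    and "g11 dvd xm1 m"
    and "g22 dvd xm1 m"
    and "degree g12 < degree g22"
    and "g11 * g22 dvd xm1 m * g12"
    and "self_reciprocal (gcd g11 g22)"
    and "self_reciprocal (xm1 m div lcm g11 g22)"
    and "gcd (gcd (g22 div gcd g11 g22) (reflect_poly (g22 div gcd g11 g22)))
             (g11 * barpoly m g12 - g12 * barpoly m g11) \<noteq> 1"
  shows "\<not> symplectic_LCD m (qc_code m g11 g12 g22)"
proof -
  define g22' where "g22' = g22 div gcd g11 g22"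
  define E where "E = g11 * barpoly m g12 - g12 * barpoly m g11"
  define h where "h = gcd (gcd g22' (reflect_poly g22')) E"
  have "g22' dvd g22"
    using dvd_mult_div_cancel[OF gcd_dvd2[of g11 g22]] unfolding g22'_def by (metis dvd_triv_right)
  then have "g22' dvd xm1 m"
    using assms(4) by (rule dvd_trans)
  have "h dvd g22'" and "h dvd reflect_poly g22'" and "h dvd E"
    unfolding h_def by (meson dvd_trans gcd_dvd1 gcd_dvd2)+
  obtain u where u: "h * u = xm1 m"
    using dvd_trans[OF \<open>h dvd g22'\<close> \<open>g22' dvd xm1 m\<close>] by (metis dvdE)
  have "\<not> is_unit h"
    using assms(9) unfolding h_def g22'_def E_def by simp
  have "\<not> h dvd g11"
    using not_dvd_if_dvd_cofactor_of_gcd[OF assms(1) of_nat_neq_0_if_coprime_card[OF assms(2)] assms(4)]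
      \<open>h dvd g22'\<close> \<open>\<not> is_unit h\<close> unfolding g22'_def .
  moreover have "degree g11 \<le> m"
    using assms(1,3) by (rule degree_le_if_dvd_xm1)
  moreover have "degree g12 \<le> m"
    using assms(5) degree_le_if_dvd_xm1[OF assms(1,4)] by linarith
  moreover have "reflect_poly h dvd g22"
    using reflect_poly_dvd_if_dvd_reflect_poly[OF coeff_0_neq_0_if_dvd_xm1 \<open>h dvd reflect_poly g22'\<close>]
      assms(1) \<open>g22' dvd xm1 m\<close> \<open>g22' dvd g22\<close> by (metis dvd_trans)
  moreover have "reflect_poly h dvd E"
    using calculation(2,3) \<open>h dvd E\<close> unfolding E_def by (rule reflect_poly_dvd_cross_difference)
  ultimately show ?thesis
    unfolding E_def by (rule not_symplectic_LCD_if_cofactor[OF assms(1) u])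
qed

end
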